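(* In the VI setting below, let $u\in\mathbb{R}^n$ and $y=S(u)$, $q=u-Ay$. Then $S$ is (Fréchet) differentiable at $u$ if and only if $\mathcal K(y)=\{v\in\mathbb{R}^n: v_i=0 \text{ whenever } y_i=0\}$.
   Context: VI setting: $A\in\mathbb{R}^{n\times n}$ symmetric positive definite, $\|v\|_1=\sum_i|v_i|$. For $u\in\mathbb{R}^n$, $S(u)=y$ is the unique solution of $\langle Ay,v-y\rangle+\|v\|_1-\|y\|_1\ge\langle u,v-y\rangle$ for all $v\in\mathbb{R}^n$; equivalently there is $q\in\mathbb{R}^n$ with $Ay+q=u$, $y_iq_i=|y_i|$, $|q_i|\le1$ ($i=1,\dots,n$), and then $q=u-Ay$. Define $\mathcal K(y):=\{v\in\mathbb{R}^n: v_i=0 \text{ if } |q_i|<1;\ v_iq_i\ge0 \text{ if } y_i=0 \text{ and } |q_i|=1\}$. Known facts: $S$ is globally Lipschitz and directionally differentiable, and $\eta=S'(u;h)$ is the unique solution of $\eta\in\mathcal K(y)$, $\langle A\eta,v-\eta\rangle\ge\langle h,v-\eta\rangle$ for all $v\in\mathcal K(y)$. *)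

theory Defs
  imports "HOL-Analysis.Analysis"
begin

definition l1norm :: "real ^ 'n \<Rightarrow> real" where
  "l1norm v = (\<Sum>i\<in>UNIV. \<bar>v $ i\<bar>)"

definition spd :: "real ^ 'n ^ 'n \<Rightarrow> bool" where
  "spd A \<longleftrightarrow> transpose A = A \<and> (\<forall>x. x \<noteq> 0 \<longrightarrow> x \<bullet> (A *v x) > 0)"

definition vi_sol :: "real ^ 'n ^ 'n \<Rightarrow> real ^ 'n \<Rightarrow> real ^ 'n \<Rightarrow> bool" where
  "vi_sol A u y \<longleftrightarrow>
     (\<forall>v. (A *v y) \<bullet> (v - y) + l1norm v - l1norm y \<ge> u \<bullet> (v - y))"

text \<open>The solution operator S (the VI has a unique solution when A is SPD).\<close>
definition solop :: "real ^ 'n ^ 'n \<Rightarrow> real ^ 'n \<Rightarrow> real ^ 'n" where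
  "solop A u = (THE y. vi_sol A u y)"

text \<open>The critical cone K(y), with q = u - A y.\<close>
definition critcone :: "real ^ 'n \<Rightarrow> real ^ 'n \<Rightarrow> (real ^ 'n) set" where
  "critcone y q = {v. \<forall>i. (\<bar>q $ i\<bar> < 1 \<longrightarrow> v $ i = 0) \<and>
                          (y $ i = 0 \<and> \<bar>q $ i\<bar> = 1 \<longrightarrow> v $ i * q $ i \<ge> 0)}"

end

theory Submission
  imports Defs
begin

text \<open>
  S is well defined because the coercive convex energy y \<bullet> A y / 2 + |y|_1 - u \<bullet> y has a
  minimiser, which solves the VI, and the strong monotonicity of A makes solutions unique and
  Lipschitz in u. The solution y = S(u) is characterised componentwise by q = u - A y being an
  l1-subgradient at y: |q_i| \<le> 1, and q_i = sgn y_i wherever y_i \<noteq> 0.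

  If strict complementarity holds (|q_i| < 1 wherever y_i = 0), then for x near u the solution
  S(x) has the same sign pattern as y, so S(x) - y is the unique solution w of the linear system
  w_i = 0 for y_i = 0, (A w)_i = (x - u)_i for y_i \<noteq> 0: S is affine near u.

  If it fails at some i with y_i = 0 and |q_i| = 1, perturb u along e = q_i e_i. Moving
  backwards only shrinks |q_i|, so S(u - t e) = S(u) for 0 \<le> t \<le> 1, forcing S'(u) e = 0;
  moving forwards the i-th component of A (S(u + t e) - S(u)) must absorb the excess t, so
  |S(u + t e) - S(u)| grows linearly in t. Hence S is not differentiable at u.
\<close>

definition l1_subgradient :: "real ^ 'n \<Rightarrow> real ^ 'n \<Rightarrow> bool" where
  "l1_subgradient y q \<longleftrightarrow> (\<forall>i. \<bar>q $ i\<bar> \<le> 1 \<and> y $ i * q $ i = \<bar>y $ i\<bar>)"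

definition strictly_complementary :: "real ^ 'n \<Rightarrow> real ^ 'n \<Rightarrow> bool" where
  "strictly_complementary y q \<longleftrightarrow> (\<forall>i. y $ i = 0 \<longrightarrow> \<bar>q $ i\<bar> < 1)"

subsection \<open>The l1 subdifferential\<close>

lemma l1norm_nonneg: "0 \<le> l1norm v"
  unfolding l1norm_def by (simp add: sum_nonneg)

lemma continuous_on_l1norm: "continuous_on S l1norm"
  unfolding l1norm_def[abs_def] by (intro continuous_intros)

lemma l1norm_add_axis: "l1norm (y + axis i t) = l1norm y - \<bar>y $ i\<bar> + \<bar>y $ i + t\<bar>"
proof -
  have "l1norm (y + axis i t) = \<bar>y $ i + t\<bar> + (\<Sum>j\<in>UNIV - {i}. \<bar>y $ j\<bar>)"
    unfolding l1norm_def by (subst sum.remove[of _ i]) (auto simp: axis_def intro!: sum.cong)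
  moreover have "l1norm y = \<bar>y $ i\<bar> + (\<Sum>j\<in>UNIV - {i}. \<bar>y $ j\<bar>)"
    unfolding l1norm_def by (subst sum.remove[of _ i]) auto
  ultimately show ?thesis by simp
qed

lemma l1norm_convex:
  assumes "0 \<le> t" "t \<le> 1"
  shows "l1norm (y + t *\<^sub>R (v - y)) \<le> (1 - t) * l1norm y + t * l1norm v"
proof -
  have "l1norm (y + t *\<^sub>R (v - y)) = (\<Sum>i\<in>UNIV. \<bar>(1 - t) * y $ i + t * v $ i\<bar>)"
    unfolding l1norm_def by (intro sum.cong) (auto simp: algebra_simps)
  also have "\<dots> \<le> (\<Sum>i\<in>UNIV. (1 - t) * \<bar>y $ i\<bar> + t * \<bar>v $ i\<bar>)"
    using assms by (intro sum_mono) (metis abs_mult abs_of_nonneg abs_triangle_ineq diff_ge_0_iff_ge)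
  also have "\<dots> = (1 - t) * l1norm y + t * l1norm v"
    unfolding l1norm_def by (simp add: sum.distrib sum_distrib_left)
  finally show ?thesis .
qed

lemma l1_subgradient_iff_ineq:
  "l1_subgradient y q \<longleftrightarrow> (\<forall>v. q \<bullet> (v - y) \<le> l1norm v - l1norm y)"
proof
  assume q: "l1_subgradient y q"
  have "q \<bullet> v \<le> l1norm v" for v
  proof -
    have "q $ i * v $ i \<le> \<bar>v $ i\<bar>" for i
      using q abs_le_iff mult_left_le_one_le[of "\<bar>v $ i\<bar>" "\<bar>q $ i\<bar>"]
      by (fastforce simp: l1_subgradient_def abs_mult)
    then show ?thesis
      unfolding inner_vec_def l1norm_def by (auto intro: sum_mono)
  qed
  moreover have "q \<bullet> y = l1norm y"
    using q by (simp add: l1_subgradient_def inner_vec_def l1norm_def mult.commute)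
  ultimately show "\<forall>v. q \<bullet> (v - y) \<le> l1norm v - l1norm y"
    by (simp add: inner_diff_right)
next
  assume ineq: "\<forall>v. q \<bullet> (v - y) \<le> l1norm v - l1norm y"
  show "l1_subgradient y q"
    unfolding l1_subgradient_def
  proof
    fix i
    have k: "q $ i * t \<le> \<bar>y $ i + t\<bar> - \<bar>y $ i\<bar>" for t
      using ineq[rule_format, of "y + axis i t"] by (simp add: l1norm_add_axis inner_axis)
    have "\<bar>q $ i\<bar> \<le> 1"
      using k[of 1] k[of "-1"] by linarith
    moreover have "\<bar>y $ i\<bar> \<le> y $ i * q $ i"
      using k[of "- y $ i"] by (simp add: mult.commute)
    moreover have "y $ i * q $ i \<le> \<bar>y $ i\<bar>"
      using \<open>\<bar>q $ i\<bar> \<le> 1\<close> abs_le_iff mult_left_le_one_le[of "\<bar>y $ i\<bar>" "\<bar>q $ i\<bar>"]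
      by (fastforce simp: abs_mult mult.commute)
    ultimately show "\<bar>q $ i\<bar> \<le> 1 \<and> y $ i * q $ i = \<bar>y $ i\<bar>"
      by linarith
  qed
qed

lemma l1_subgradient_nonzero:
  assumes "l1_subgradient y q" "y $ i \<noteq> 0"
  shows "q $ i = sgn (y $ i)"
proof -
  have "y $ i * q $ i = y $ i * sgn (y $ i)"
    using assms(1) by (simp add: l1_subgradient_def abs_sgn)
  then show ?thesis
    using assms(2) by simp
qed

lemma vi_sol_iff_l1_subgradient: "vi_sol A u y \<longleftrightarrow> l1_subgradient y (u - A *v y)"
  unfolding vi_sol_def l1_subgradient_iff_ineq by (simp add: inner_diff_left algebra_simps)

subsection \<open>Well-posedness of the variational inequality\<close>

lemma spd_inner_commute:
  assumes "spd A"
  shows "(A *v x) \<bullet> y = x \<bullet> (A *v y)"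
proof -
  have "A *v x = x v* A"
    using assms transpose_matrix_vector[of A x] by (simp add: spd_def)
  then show ?thesis by (simp add: dot_lmul_matrix)
qed

lemma spd_quadratic_add:
  assumes "spd A"
  shows "(y + t *\<^sub>R w) \<bullet> (A *v (y + t *\<^sub>R w))
           = y \<bullet> (A *v y) + 2 * t * ((A *v y) \<bullet> w) + t\<^sup>2 * (w \<bullet> (A *v w))"
proof -
  have "y \<bullet> (A *v w) = (A *v y) \<bullet> w" "w \<bullet> (A *v y) = (A *v y) \<bullet> w"
    using spd_inner_commute[OF assms, of y w] by (simp_all add: inner_commute)
  then show ?thesis
    by (simp add: matrix_vector_right_distrib matrix_vector_mult_scaleR inner_add_left
                  inner_add_right power2_eq_square algebra_simps)
qed

lemma spd_coercive:
  assumes "spd A"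
  obtains c where "c > 0" "\<And>x. c * (norm x)\<^sup>2 \<le> x \<bullet> (A *v x)"
proof -
  have "continuous_on (sphere 0 1) (\<lambda>x. x \<bullet> (A *v x))"
    by (intro continuous_intros matrix_vector_mult_linear_continuous_on)
  moreover have "sphere (0 :: real ^ 'n) 1 \<noteq> {}"
    by simp
  ultimately obtain x0 where x0: "x0 \<in> sphere 0 1"
    "\<And>z. z \<in> sphere 0 1 \<Longrightarrow> x0 \<bullet> (A *v x0) \<le> z \<bullet> (A *v z)"
    using continuous_attains_inf[OF compact_sphere] by blast
  define c where "c = x0 \<bullet> (A *v x0)"
  have "x0 \<noteq> 0"
    using x0(1) by auto
  then have "c > 0"
    using assms by (simp add: c_def spd_def)
  moreover have "c * (norm x)\<^sup>2 \<le> x \<bullet> (A *v x)" for x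
  proof (cases "x = 0")
    case False
    define z where "z = (1 / norm x) *\<^sub>R x"
    have "x = norm x *\<^sub>R z"
      using False by (simp add: z_def)
    then have "x \<bullet> (A *v x) = (norm x)\<^sup>2 * (z \<bullet> (A *v z))"
      by (metis inner_scaleR_left inner_scaleR_right matrix_vector_mult_scaleR power2_eq_square mult.assoc)
    moreover have "c \<le> z \<bullet> (A *v z)"
      using x0(2)[of z] False by (simp add: c_def z_def)
    ultimately show ?thesis
      by (metis mult.commute mult_right_mono zero_le_power2)
  qed simp
  ultimately show ?thesis using that by blast
qed

lemma vi_sol_monotone:
  assumes "vi_sol A u1 y1" "vi_sol A u2 y2"
  shows "(y1 - y2) \<bullet> (A *v (y1 - y2)) \<le> (u1 - u2) \<bullet> (y1 - y2)"
proof -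
  have "u1 \<bullet> (y2 - y1) \<le> (A *v y1) \<bullet> (y2 - y1) + l1norm y2 - l1norm y1"
       "u2 \<bullet> (y1 - y2) \<le> (A *v y2) \<bullet> (y1 - y2) + l1norm y1 - l1norm y2"
    using assms unfolding vi_sol_def by blast+
  then show ?thesis
    by (simp add: matrix_vector_mult_diff_distrib inner_diff_left inner_diff_right inner_commute)
qed

lemma vi_sol_lipschitz:
  assumes "spd A"
  obtains c where "c > 0"
    "\<And>u1 u2 y1 y2. vi_sol A u1 y1 \<Longrightarrow> vi_sol A u2 y2 \<Longrightarrow> c * norm (y1 - y2) \<le> norm (u1 - u2)"
proof -
  obtain c where c: "c > 0" "\<And>x. c * (norm x)\<^sup>2 \<le> x \<bullet> (A *v x)"
    using spd_coercive[OF assms] by blast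
  have "c * norm (y1 - y2) \<le> norm (u1 - u2)" if "vi_sol A u1 y1" "vi_sol A u2 y2" for u1 u2 y1 y2
  proof -
    have "c * norm (y1 - y2) * norm (y1 - y2) \<le> (u1 - u2) \<bullet> (y1 - y2)"
      using c(2)[of "y1 - y2"] vi_sol_monotone[OF that] by (simp add: power2_eq_square mult.assoc)
    also have "\<dots> \<le> norm (u1 - u2) * norm (y1 - y2)"
      by (rule norm_cauchy_schwarz)
    finally show ?thesis
      by (cases "y1 = y2") simp_all
  qed
  with c(1) that show ?thesis by blast
qed

lemma vi_sol_unique:
  assumes "spd A" "vi_sol A u y1" "vi_sol A u y2"
  shows "y1 = y2"
proof -
  obtain c where "c > 0" "c * norm (y1 - y2) \<le> norm (u - u)"
    using vi_sol_lipschitz[OF assms(1)] assms(2,3) by metis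
  then show ?thesis by (simp add: mult_le_0_iff)
qed

definition vi_energy :: "real ^ 'n ^ 'n \<Rightarrow> real ^ 'n \<Rightarrow> real ^ 'n \<Rightarrow> real" where
  "vi_energy A u y = y \<bullet> (A *v y) / 2 + l1norm y - u \<bullet> y"

lemma vi_energy_attains_min:
  assumes "spd A"
  obtains y where "\<And>z. vi_energy A u y \<le> vi_energy A u z"
proof -
  obtain c where c: "c > 0" "\<And>x. c * (norm x)\<^sup>2 \<le> x \<bullet> (A *v x)"
    using spd_coercive[OF assms] by blast
  define R where "R = 2 * norm u / c"
  have "continuous_on (cball 0 R) (vi_energy A u)"
    unfolding vi_energy_def[abs_def]
    by (intro continuous_intros continuous_on_l1norm matrix_vector_mult_linear_continuous_on) auto
  moreover have "R \<ge> 0"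
    using c(1) by (simp add: R_def)
  ultimately obtain y where y: "y \<in> cball 0 R" "\<And>z. z \<in> cball 0 R \<Longrightarrow> vi_energy A u y \<le> vi_energy A u z"
    using continuous_attains_inf[OF compact_cball] by (metis cball_eq_empty not_less)
  have "vi_energy A u y \<le> vi_energy A u z" for z
  proof (cases "z \<in> cball 0 R")
    case False
    then have "c * R \<le> c * norm z"
      using c(1) by simp
    then have "0 \<le> norm z * (c * norm z / 2 - norm u)"
      using c(1) by (simp add: R_def)
    also have "\<dots> \<le> vi_energy A u z"
      using c(2)[of z] norm_cauchy_schwarz[of u z] l1norm_nonneg[of z]
      by (simp add: vi_energy_def power2_eq_square algebra_simps)
    finally have "vi_energy A u 0 \<le> vi_energy A u z"
      by (simp add: vi_energy_def l1norm_def)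
    moreover have "vi_energy A u y \<le> vi_energy A u 0"
      using y(2) \<open>R \<ge> 0\<close> by simp
    ultimately show ?thesis by linarith
  qed (rule y(2))
  then show ?thesis using that by blast
qed

lemma nonneg_if_perturbations_nonneg:
  fixes g c :: real
  assumes "\<And>t. 0 < t \<Longrightarrow> t \<le> 1 \<Longrightarrow> 0 \<le> g + t * c"
  shows "0 \<le> g"
proof (rule tendsto_lowerbound)
  show "((\<lambda>t. g + t * c) \<longlongrightarrow> g) (at_right 0)"
    by (auto intro!: tendsto_eq_intros)
  show "\<forall>\<^sub>F t in at_right 0. 0 \<le> g + t * c"
    using assms by (auto simp: eventually_at_right_field intro!: exI[of _ 1])
qed simp

lemma vi_energy_min_imp_vi_sol:
  assumes "spd A" and min: "\<And>z. vi_energy A u y \<le> vi_energy A u z"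
  shows "vi_sol A u y"
  unfolding vi_sol_def
proof
  fix v
  define w where "w = v - y"
  define g where "g = (A *v y) \<bullet> w + l1norm v - l1norm y - u \<bullet> w"
  have "0 \<le> g + t * (w \<bullet> (A *v w) / 2)" if t: "0 < t" "t \<le> 1" for t
  proof -
    have "vi_energy A u (y + t *\<^sub>R w) = vi_energy A u y + t * ((A *v y) \<bullet> w - u \<bullet> w)
            + t\<^sup>2 * (w \<bullet> (A *v w)) / 2 + l1norm (y + t *\<^sub>R w) - l1norm y"
      unfolding vi_energy_def spd_quadratic_add[OF assms(1)] by (simp add: inner_add_right algebra_simps)
    moreover have "l1norm (y + t *\<^sub>R w) \<le> l1norm y - t * l1norm y + t * l1norm v"
      using l1norm_convex[of t y v] t by (simp add: w_def algebra_simps)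
    moreover have "t * (g + t * (w \<bullet> (A *v w) / 2)) = t * ((A *v y) \<bullet> w - u \<bullet> w)
            + t * l1norm v - t * l1norm y + t\<^sup>2 * (w \<bullet> (A *v w)) / 2"
      by (simp add: g_def power2_eq_square algebra_simps)
    ultimately have "0 \<le> t * (g + t * (w \<bullet> (A *v w) / 2))"
      using min[of "y + t *\<^sub>R w"] by linarith
    then show ?thesis
      using t(1) by (simp add: zero_le_mult_iff)
  qed
  then have "0 \<le> g"
    by (rule nonneg_if_perturbations_nonneg)
  then show "(A *v y) \<bullet> (v - y) + l1norm v - l1norm y \<ge> u \<bullet> (v - y)"
    by (simp add: g_def w_def)
qed

lemma vi_sol_exists:
  assumes "spd A"
  obtains y where "vi_sol A u y"
  using vi_energy_attains_min[OF assms] vi_energy_min_imp_vi_sol[OF assms] by metis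

lemma solop_vi_sol:
  assumes "spd A"
  shows "vi_sol A u (solop A u)"
proof -
  have "\<exists>!y. vi_sol A u y"
    using vi_sol_exists[OF assms] vi_sol_unique[OF assms] by metis
  then show ?thesis
    unfolding solop_def by (rule theI')
qed

lemma solop_eqI:
  assumes "spd A" "vi_sol A u y"
  shows "solop A u = y"
  using vi_sol_unique[OF assms(1) solop_vi_sol[OF assms(1)] assms(2)] .

lemma solop_l1_subgradient:
  assumes "spd A"
  shows "l1_subgradient (solop A u) (u - A *v solop A u)"
  using solop_vi_sol[OF assms] by (simp add: vi_sol_iff_l1_subgradient)

lemma isCont_solop:
  assumes "spd A"
  shows "isCont (solop A) u"
proof -
  obtain c where c: "c > 0"
    "\<And>u1 u2 y1 y2. vi_sol A u1 y1 \<Longrightarrow> vi_sol A u2 y2 \<Longrightarrow> c * norm (y1 - y2) \<le> norm (u1 - u2)"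
    using vi_sol_lipschitz[OF assms] by blast
  have "(1 / c)-lipschitz_on UNIV (solop A)"
  proof (rule lipschitz_onI)
    fix x1 x2
    show "dist (solop A x1) (solop A x2) \<le> 1 / c * dist x1 x2"
      using c(2)[OF solop_vi_sol[OF assms] solop_vi_sol[OF assms], of x1 x2] c(1)
      by (simp add: dist_norm field_simps)
  qed (use c(1) in simp)
  then show ?thesis
    using lipschitz_on_continuous_within by blast
qed

subsection \<open>Strict complementarity and the critical cone\<close>

lemma l1_subgradientD:
  assumes "l1_subgradient y q"
  shows "\<bar>q $ i\<bar> \<le> 1" and "y $ i * q $ i = \<bar>y $ i\<bar>"
  using assms by (simp_all add: l1_subgradient_def)

lemma critcone_eq_iff_strictly_complementary:
  assumes q: "l1_subgradient y q"
  shows "critcone y q = {v. \<forall>i. y $ i = 0 \<longrightarrow> v $ i = 0} \<longleftrightarrow> strictly_complementary y q"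
proof
  assume eq: "critcone y q = {v. \<forall>i. y $ i = 0 \<longrightarrow> v $ i = 0}"
  show "strictly_complementary y q"
    unfolding strictly_complementary_def
  proof (intro allI impI)
    fix i
    assume yi: "y $ i = 0"
    show "\<bar>q $ i\<bar> < 1"
    proof (rule ccontr)
      assume "\<not> \<bar>q $ i\<bar> < 1"
      moreover have "\<bar>q $ i\<bar> \<le> 1"
        using l1_subgradientD(1)[OF q] .
      ultimately have "\<bar>q $ i\<bar> = 1"
        by linarith
      then have "axis i (q $ i) \<in> critcone y q"
        by (auto simp: critcone_def axis_def)
      with eq yi \<open>\<bar>q $ i\<bar> = 1\<close> show False
        by (auto simp: axis_def)
    qed
  qed
next
  assume "strictly_complementary y q"
  moreover have "\<bar>q $ i\<bar> = 1" if "y $ i \<noteq> 0" for i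
    using l1_subgradient_nonzero[OF q that] that by (simp add: abs_sgn_eq)
  ultimately show "critcone y q = {v. \<forall>i. y $ i = 0 \<longrightarrow> v $ i = 0}"
    unfolding critcone_def strictly_complementary_def by force
qed

subsection \<open>Failure of strict complementarity\<close>

lemma has_derivative_ray_quotient:
  assumes "(f has_derivative D) (at x)"
  shows "((\<lambda>t. (f (x + t *\<^sub>R e) - f x) /\<^sub>R t) \<longlongrightarrow> D e) (at_right 0)"
proof -
  have "((\<lambda>t. x + t *\<^sub>R e) has_derivative (\<lambda>t. t *\<^sub>R e)) (at 0 within {0<..})"
    by (auto intro!: derivative_eq_intros)
  moreover have "(f has_derivative D) (at (x + 0 *\<^sub>R e))"
    using assms by simp
  ultimately have "((\<lambda>t. f (x + t *\<^sub>R e)) has_derivative (\<lambda>t. D (t *\<^sub>R e))) (at 0 within {0<..})"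
    by (rule has_derivative_compose)
  then have "((\<lambda>t. (f (x + t *\<^sub>R e) - f x - D (t *\<^sub>R e)) /\<^sub>R norm t) \<longlongrightarrow> 0) (at_right 0)"
    by (simp add: has_derivative_at_within)
  then have "((\<lambda>t. (f (x + t *\<^sub>R e) - f x - D (t *\<^sub>R e)) /\<^sub>R norm t + D e) \<longlongrightarrow> 0 + D e) (at_right 0)"
    by (intro tendsto_add tendsto_const)
  moreover have "\<forall>\<^sub>F t in at_right 0. (f (x + t *\<^sub>R e) - f x - D (t *\<^sub>R e)) /\<^sub>R norm t + D e
                                      = (f (x + t *\<^sub>R e) - f x) /\<^sub>R t"
    using eventually_at_right_less
  proof (rule eventually_mono)
    fix t :: real
    assume "0 < t"
    then show "(f (x + t *\<^sub>R e) - f x - D (t *\<^sub>R e)) /\<^sub>R norm t + D e = (f (x + t *\<^sub>R e) - f x) /\<^sub>R t"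
      using linear_cmul[OF has_derivative_linear[OF assms], of t e]
      by (simp add: scaleR_diff_right)
  qed
  ultimately show ?thesis
    by (simp add: tendsto_cong)
qed

text \<open>Decreasing u along q_i e_i only moves the i-th residual from q_i towards 0.\<close>

lemma solop_backward_ray:
  assumes "spd A" and yi: "solop A u $ i = 0" and qi: "\<bar>(u - A *v solop A u) $ i\<bar> = 1"
    and t: "0 \<le> t" "t \<le> 1"
  defines "q \<equiv> u - A *v solop A u"
  shows "solop A (u - t *\<^sub>R axis i (q $ i)) = solop A u"
proof (rule solop_eqI[OF assms(1)])
  have "\<bar>(q - t *\<^sub>R axis i (q $ i)) $ j\<bar> \<le> 1 \<and>
        solop A u $ j * (q - t *\<^sub>R axis i (q $ i)) $ j = \<bar>solop A u $ j\<bar>" for j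
  proof (cases "j = i")
    case True
    have "(q - t *\<^sub>R axis i (q $ i)) $ i = (1 - t) * q $ i"
      by (simp add: algebra_simps)
    then show ?thesis
      using True yi qi[folded q_def] t by (simp add: abs_mult)
  next
    case False
    then show ?thesis
      using l1_subgradientD[OF solop_l1_subgradient[OF assms(1)], of u j] by (simp add: q_def axis_def)
  qed
  then show "vi_sol A (u - t *\<^sub>R axis i (q $ i)) (solop A u)"
    by (simp add: vi_sol_iff_l1_subgradient l1_subgradient_def q_def algebra_simps)
qed

text \<open>Increasing u along q_i e_i pushes the i-th residual beyond 1; A (S(u + t e) - S u) absorbs the excess.\<close>

lemma solop_forward_ray:
  assumes "spd A" and qi: "\<bar>(u - A *v solop A u) $ i\<bar> = 1" and t: "0 \<le> t"
  defines "q \<equiv> u - A *v solop A u"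
  shows "t \<le> \<bar>(A *v (solop A (u + t *\<^sub>R axis i (q $ i)) - solop A u)) $ i\<bar>"
proof -
  define r where "r = (A *v (solop A (u + t *\<^sub>R axis i (q $ i)) - solop A u)) $ i"
  have "\<bar>(u + t *\<^sub>R axis i (q $ i) - A *v solop A (u + t *\<^sub>R axis i (q $ i))) $ i\<bar> \<le> 1"
    by (rule l1_subgradientD(1)[OF solop_l1_subgradient[OF assms(1)]])
  then have "\<bar>(1 + t) * q $ i - r\<bar> \<le> 1"
    by (simp add: r_def q_def matrix_vector_mult_diff_distrib algebra_simps)
  moreover have "\<bar>(1 + t) * q $ i\<bar> = 1 + t"
    using qi t by (simp add: q_def abs_mult)
  ultimately show ?thesis
    using abs_triangle_ineq4[of "(1 + t) * q $ i" r] by (simp add: r_def)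
qed

lemma solop_derivative_backward_ray:
  assumes "spd A" and D: "(solop A has_derivative D) (at u)"
    and yi: "solop A u $ i = 0" and qi: "\<bar>(u - A *v solop A u) $ i\<bar> = 1"
  defines "e \<equiv> axis i ((u - A *v solop A u) $ i)"
  shows "D e = 0"
proof -
  have "((\<lambda>t. (solop A (u + t *\<^sub>R - e) - solop A u) /\<^sub>R t) \<longlongrightarrow> D (- e)) (at_right 0)"
    by (rule has_derivative_ray_quotient[OF D])
  moreover have "((\<lambda>t. (solop A (u + t *\<^sub>R - e) - solop A u) /\<^sub>R t) \<longlongrightarrow> 0) (at_right 0)"
    using eventually_at_right_real[OF zero_less_one]
  proof (rule tendsto_eventually[OF eventually_mono])
    fix t :: real
    assume "t \<in> {0<..<1}"
    then show "(solop A (u + t *\<^sub>R - e) - solop A u) /\<^sub>R t = 0"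
      using solop_backward_ray[OF assms(1) yi qi, of t] by (simp add: e_def)
  qed
  ultimately have "D (- e) = 0"
    using tendsto_unique[OF trivial_limit_at_right_real] by blast
  then show ?thesis
    using linear_neg[OF has_derivative_linear[OF D]] by simp
qed

lemma solop_derivative_forward_ray:
  assumes "spd A" and D: "(solop A has_derivative D) (at u)"
    and qi: "\<bar>(u - A *v solop A u) $ i\<bar> = 1"
  defines "e \<equiv> axis i ((u - A *v solop A u) $ i)"
  shows "D e \<noteq> 0"
proof -
  obtain K where K: "K > 0" "\<And>x. norm (A *v x) \<le> norm x * K"
    using bounded_linear.pos_bounded[OF matrix_vector_mul_bounded_linear[of A]] by blast
  have "((\<lambda>t. norm ((solop A (u + t *\<^sub>R e) - solop A u) /\<^sub>R t)) \<longlongrightarrow> norm (D e)) (at_right 0)"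
    by (intro tendsto_norm has_derivative_ray_quotient[OF D])
  moreover have "\<forall>\<^sub>F t in at_right 0. 1 / K \<le> norm ((solop A (u + t *\<^sub>R e) - solop A u) /\<^sub>R t)"
    using eventually_at_right_less
  proof (rule eventually_mono)
    fix t :: real
    assume "0 < t"
    define w where "w = solop A (u + t *\<^sub>R e) - solop A u"
    have "t \<le> \<bar>(A *v w) $ i\<bar>"
      using solop_forward_ray[OF assms(1) qi, of t] \<open>0 < t\<close> by (simp add: w_def e_def)
    also have "\<dots> \<le> norm (A *v w)"
      by (rule component_le_norm_cart)
    also have "\<dots> \<le> norm w * K"
      by (rule K(2))
    finally show "1 / K \<le> norm ((solop A (u + t *\<^sub>R e) - solop A u) /\<^sub>R t)"
      unfolding w_def[symmetric] using \<open>0 < t\<close> K(1) by (simp add: field_simps)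
  qed
  ultimately have "1 / K \<le> norm (D e)"
    by (rule tendsto_lowerbound) simp
  with K(1) show ?thesis
    by auto
qed

lemma differentiable_solop_imp_strictly_complementary:
  assumes "spd A" and "solop A differentiable (at u)"
  shows "strictly_complementary (solop A u) (u - A *v solop A u)"
  unfolding strictly_complementary_def
proof (intro allI impI)
  fix i
  assume yi: "solop A u $ i = 0"
  obtain D where D: "(solop A has_derivative D) (at u)"
    using assms(2) by (auto simp: differentiable_def)
  show "\<bar>(u - A *v solop A u) $ i\<bar> < 1"
  proof (rule ccontr)
    assume "\<not> \<bar>(u - A *v solop A u) $ i\<bar> < 1"
    then have qi: "\<bar>(u - A *v solop A u) $ i\<bar> = 1"
      using l1_subgradientD(1)[OF solop_l1_subgradient[OF assms(1)], of u i] by linarith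
    show False
      using solop_derivative_backward_ray[OF assms(1) D yi qi]
            solop_derivative_forward_ray[OF assms(1) D qi] by simp
  qed
qed

subsection \<open>Strict complementarity implies differentiability\<close>

definition sign_stable :: "real ^ 'n \<Rightarrow> real ^ 'n \<Rightarrow> real ^ 'n \<Rightarrow> bool" where
  "sign_stable y y' q' \<longleftrightarrow> (\<forall>i. (y $ i \<noteq> 0 \<longrightarrow> 0 < y' $ i * y $ i) \<and> (y $ i = 0 \<longrightarrow> \<bar>q' $ i\<bar> < 1))"

lemma eventually_nhds_solop_sign_stable:
  assumes "spd A" and sc: "strictly_complementary (solop A u) (u - A *v solop A u)"
  shows "\<forall>\<^sub>F x in nhds u. sign_stable (solop A u) (solop A x) (x - A *v solop A x)"
  unfolding sign_stable_def
proof (intro eventually_all_finite eventually_conj)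
  have S: "(solop A \<longlongrightarrow> solop A u) (nhds u)"
    using isCont_solop[OF assms(1)] by (simp add: continuous_at tendsto_at_iff_tendsto_nhds)
  have Q: "((\<lambda>x. x - A *v solop A x) \<longlongrightarrow> u - A *v solop A u) (nhds u)"
    by (intro tendsto_diff filterlim_ident bounded_linear.tendsto[OF matrix_vector_mul_bounded_linear] S)
  fix i
  show "\<forall>\<^sub>F x in nhds u. solop A u $ i \<noteq> 0 \<longrightarrow> 0 < solop A x $ i * solop A u $ i"
  proof (cases "solop A u $ i = 0")
    case False
    have "((\<lambda>x. solop A x $ i * solop A u $ i) \<longlongrightarrow> solop A u $ i * solop A u $ i) (nhds u)"
      by (intro tendsto_mult_right tendsto_vec_nth S)
    moreover have "0 < solop A u $ i * solop A u $ i"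
      using False by (metis not_real_square_gt_zero)
    ultimately have "\<forall>\<^sub>F x in nhds u. 0 < solop A x $ i * solop A u $ i"
      by (rule order_tendstoD(1))
    then show ?thesis
      by (rule eventually_mono) simp
  qed simp
  show "\<forall>\<^sub>F x in nhds u. solop A u $ i = 0 \<longrightarrow> \<bar>(x - A *v solop A x) $ i\<bar> < 1"
  proof (cases "solop A u $ i = 0")
    case True
    have "((\<lambda>x. \<bar>(x - A *v solop A x) $ i\<bar>) \<longlongrightarrow> \<bar>(u - A *v solop A u) $ i\<bar>) (nhds u)"
      by (intro tendsto_rabs tendsto_vec_nth Q)
    moreover have "\<bar>(u - A *v solop A u) $ i\<bar> < 1"
      using sc True by (simp add: strictly_complementary_def)
    ultimately have "\<forall>\<^sub>F x in nhds u. \<bar>(x - A *v solop A x) $ i\<bar> < 1"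
      by (rule order_tendstoD(2))
    then show ?thesis
      by (rule eventually_mono) simp
  qed simp
qed

lemma l1_subgradient_sign_stable:
  assumes q: "l1_subgradient y q" and q': "l1_subgradient y' q'"
    and stable: "sign_stable y y' q'"
  shows "y $ i = 0 \<Longrightarrow> y' $ i = 0" and "y $ i \<noteq> 0 \<Longrightarrow> q' $ i = q $ i"
proof -
  assume yi: "y $ i = 0"
  show "y' $ i = 0"
  proof (rule ccontr)
    assume "y' $ i \<noteq> 0"
    then have "\<bar>q' $ i\<bar> = 1"
      using l1_subgradient_nonzero[OF q'] by (simp add: abs_sgn_eq)
    moreover have "\<bar>q' $ i\<bar> < 1"
      using stable yi unfolding sign_stable_def by blast
    ultimately show False
      by simp
  qed
next
  assume yi: "y $ i \<noteq> 0"
  moreover have "0 < y' $ i * y $ i"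
    using stable yi by (simp add: sign_stable_def)
  ultimately have "sgn (y' $ i) = sgn (y $ i)" and "y' $ i \<noteq> 0"
    by (auto simp: zero_less_mult_iff)
  then show "q' $ i = q $ i"
    using l1_subgradient_nonzero[OF q yi] l1_subgradient_nonzero[OF q'] by simp
qed

text \<open>
  The derivative S'(u; h) of the paper: the solution of the VI over the critical cone, which
  under strict complementarity is the subspace of vectors vanishing where y does.
\<close>

definition linearized_sol :: "real ^ 'n ^ 'n \<Rightarrow> real ^ 'n \<Rightarrow> real ^ 'n \<Rightarrow> real ^ 'n \<Rightarrow> bool" where
  "linearized_sol A y h w \<longleftrightarrow>
     (\<forall>i. y $ i = 0 \<longrightarrow> w $ i = 0) \<and> (\<forall>i. y $ i \<noteq> 0 \<longrightarrow> (A *v w) $ i = h $ i)"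

definition linearized_solop :: "real ^ 'n ^ 'n \<Rightarrow> real ^ 'n \<Rightarrow> real ^ 'n \<Rightarrow> real ^ 'n" where
  "linearized_solop A y h = (THE w. linearized_sol A y h w)"

lemma linearized_sol_add:
  "linearized_sol A y h1 w1 \<Longrightarrow> linearized_sol A y h2 w2 \<Longrightarrow> linearized_sol A y (h1 + h2) (w1 + w2)"
  by (simp add: linearized_sol_def matrix_vector_right_distrib)

lemma linearized_sol_scaleR:
  "linearized_sol A y h w \<Longrightarrow> linearized_sol A y (c *\<^sub>R h) (c *\<^sub>R w)"
  by (simp add: linearized_sol_def matrix_vector_mult_scaleR)

lemma linearized_sol_unique:
  assumes "spd A" "linearized_sol A y h w1" "linearized_sol A y h w2"
  shows "w1 = w2"
proof -
  have "(w1 - w2) $ i * (A *v (w1 - w2)) $ i = 0" for i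
    using assms(2,3) by (cases "y $ i = 0") (simp_all add: linearized_sol_def matrix_vector_mult_diff_distrib)
  then have "(w1 - w2) \<bullet> (A *v (w1 - w2)) = 0"
    unfolding inner_vec_def inner_real_def by (intro sum.neutral) blast
  moreover have "w1 - w2 \<noteq> 0 \<Longrightarrow> 0 < (w1 - w2) \<bullet> (A *v (w1 - w2))"
    using assms(1) by (simp add: spd_def)
  ultimately show ?thesis
    by auto
qed

lemma linearized_solop_eqI:
  assumes "spd A" "linearized_sol A y h w"
  shows "linearized_solop A y h = w"
  unfolding linearized_solop_def using assms linearized_sol_unique by blast

lemma linear_linearized_solop:
  assumes "spd A" and ex: "\<And>h. \<exists>w. linearized_sol A y h w"
  shows "linear (linearized_solop A y)"
proof -
  have sol: "linearized_sol A y h (linearized_solop A y h)" for h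
    using ex[of h] linearized_solop_eqI[OF assms(1)] by metis
  show ?thesis
    by (intro linearI linearized_solop_eqI[OF assms(1)] linearized_sol_add linearized_sol_scaleR sol)
qed

lemma linearized_sol_solop:
  assumes "spd A"
    and stable: "sign_stable (solop A u) (solop A x) (x - A *v solop A x)"
  shows "linearized_sol A (solop A u) (x - u) (solop A x - solop A u)"
proof -
  note stable' = l1_subgradient_sign_stable[OF solop_l1_subgradient[OF assms(1)]
                   solop_l1_subgradient[OF assms(1)] stable]
  show ?thesis
    unfolding linearized_sol_def
    using stable'(1) stable'(2) by (auto simp: matrix_vector_mult_diff_distrib algebra_simps)
qed

lemma linearized_sol_exists:
  assumes "spd A" and sc: "strictly_complementary (solop A u) (u - A *v solop A u)"
  shows "\<exists>w. linearized_sol A (solop A u) h w"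
proof -
  have "((\<lambda>t. u + t *\<^sub>R h) \<longlongrightarrow> u) (at_right 0)"
    by (auto intro!: tendsto_eq_intros)
  then have "\<forall>\<^sub>F t in at_right 0.
               sign_stable (solop A u) (solop A (u + t *\<^sub>R h)) (u + t *\<^sub>R h - A *v solop A (u + t *\<^sub>R h))"
    using eventually_nhds_solop_sign_stable[OF assms] by (rule eventually_compose_filterlim[rotated])
  then have "\<forall>\<^sub>F t in at_right 0. 0 < t \<and>
               linearized_sol A (solop A u) (t *\<^sub>R h) (solop A (u + t *\<^sub>R h) - solop A u)"
    using eventually_at_right_less
    by eventually_elim (use linearized_sol_solop[OF assms(1)] in fastforce)
  then obtain t where t: "0 < t" "linearized_sol A (solop A u) (t *\<^sub>R h) (solop A (u + t *\<^sub>R h) - solop A u)"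
    using eventually_happens'[OF trivial_limit_at_right_real] by blast
  then show ?thesis
    using linearized_sol_scaleR[of A "solop A u" "t *\<^sub>R h" _ "1 / t"] by auto
qed

theorem solop_has_derivative:
  assumes "spd A" and sc: "strictly_complementary (solop A u) (u - A *v solop A u)"
  shows "(solop A has_derivative linearized_solop A (solop A u)) (at u)"
proof -
  define L where "L = linearized_solop A (solop A u)"
  have L: "linear L"
    unfolding L_def using linear_linearized_solop[OF assms(1) linearized_sol_exists[OF assms]] .
  obtain U where U: "open U" "u \<in> U"
    "\<And>x. x \<in> U \<Longrightarrow> linearized_sol A (solop A u) (x - u) (solop A x - solop A u)"
    using eventually_nhds_solop_sign_stable[OF assms]
    unfolding eventually_nhds by (blast intro: linearized_sol_solop[OF assms(1)])
  have "((\<lambda>x. L x + (solop A u - L u)) has_derivative L) (at u)"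
    using L by (intro has_derivative_add_const bounded_linear_imp_has_derivative linear_conv_bounded_linear[THEN iffD1])
  moreover have "L x + (solop A u - L u) = solop A x" if "x \<in> U" for x
  proof -
    have "L x - L u = solop A x - solop A u"
      using linearized_solop_eqI[OF assms(1) U(3)[OF that]] linear_diff[OF L, of x u] by (simp add: L_def)
    then show ?thesis
      by (simp add: algebra_simps)
  qed
  ultimately show ?thesis
    unfolding L_def using has_derivative_transform_within_open[OF _ U(1,2)] by blast
qed

theorem lemma4p1:
  fixes A :: "real ^ 'n ^ 'n" and u :: "real ^ 'n"
  assumes "spd A"
  shows "solop A differentiable (at u) \<longleftrightarrow>
         critcone (solop A u) (u - A *v solop A u) = {v. \<forall>i. solop A u $ i = 0 \<longrightarrow> v $ i = 0}"
proof -
  have "solop A differentiable (at u) \<longleftrightarrow> strictly_complementary (solop A u) (u - A *v solop A u)"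
    using differentiable_solop_imp_strictly_complementary[OF assms]
          solop_has_derivative[OF assms] differentiableI by blast
  then show ?thesis
    using critcone_eq_iff_strictly_complementary[OF solop_l1_subgradient[OF assms]] by simp
qed

end
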